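(* Let $(\mathfrak{A},\mathfrak{A}_0)$ be a CQ*-algebra as in the context, let $H=H^*\in\mathfrak{A}$ and $\omega\in E(\mathfrak{A}_0)$, and suppose $\overline{\omega}$ is a ground state for $H$ with eigenvalue $\alpha_*$. Then: (1) $-i\,\overline{\omega}(A^*\delta_H(A))\ge0$ for all $A\in\mathfrak{A}_0$; (2) $\overline{\omega}(\delta_H(A))=0$ for all $A\in\mathfrak{A}_0$; (3) $\alpha_*=\min Spec(\pi_{\overline{\omega}}(H))$.
   Context: Let $\mathfrak{A}_0$ be a unital C*-algebra with C*-norm $\|\cdot\|_0$ and unit $I$, and $\|\cdot\|$ another norm on $\mathfrak{A}_0$ with $\|A\|\le\|A\|_0$, $\|AB\|\le\|A\|\,\|B\|_0$, $\|A^*\|=\|A\|$. $\mathfrak{A}$ is the $\|\cdot\|$-completion of $\mathfrak{A}_0$, with $XA:=\lim A_nA$, $AX:=\lim AA_n$, $X^*:=\lim A_n^*$ for $X\in\mathfrak{A}$, $A\in\mathfrak{A}_0$, $A_n\in\mathfrak{A}_0$, $\|A_n-X\|\to0$. $E(\mathfrak{A}_0)$ is the set of positive linear functionals $\omega$ on $\mathfrak{A}_0$ with $\omega(I)=1$ and $|\omega(A)|\le\gamma\|A\|$ for some $\gamma>0$; $\overline{\omega}$ is its continuous extension to $\mathfrak{A}$. $(\pi_\omega,\lambda_\omega,\mathcal{H}_\omega)$ is the GNS construction of $\omega$ on $\mathfrak{A}_0$ ($\lambda_\omega:\mathfrak{A}_0\to\mathcal{H}_\omega$ linear with dense range, $(\lambda_\omega(A)|\lambda_\omega(B))=\omega(B^*A)$).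 For $X\in\mathfrak{A}$ and $B\in\mathfrak{A}_0$, $\pi_{\overline{\omega}}(X)\lambda_\omega(B)$ is the conjugate-linear functional on $\lambda_\omega(\mathfrak{A}_0)$ given by $\langle\pi_{\overline{\omega}}(X)\lambda_\omega(B),\lambda_\omega(C)\rangle=\overline{\omega}(C^*XB)$, $C\in\mathfrak{A}_0$. Such a functional $v$ is bounded if it extends continuously to $\mathcal{H}_\omega$, and then $[v]\in\mathcal{H}_\omega$ is the vector with $\langle v,\eta\rangle=([v]|\eta)$. For $A\in\mathfrak{A}_0$, $\delta_H(A):=i(HA-AH)\in\mathfrak{A}$. $\overline{\omega}$ is a ground state for $H$ (with eigenvalue $\alpha_*$) if (a) $\overline{\omega}(AH)=\alpha_*\overline{\omega}(A)$ for all $A\in\mathfrak{A}_0$, and (b) $\langle\pi_{\overline{\omega}}(H)\lambda_\omega(B),\lambda_\omega(B)\rangle\ge\alpha_*(\lambda_\omega(B)|\lambda_\omega(B))$ for all $B\in\mathfrak{A}_0$. $Spec(\pi_{\overline{\omega}}(H))$ is the set of $\alpha\in\mathbb{C}$ for which there is $B\in\mathfrak{A}_0$ with $\lambda_\omega(B)\ne0$, $\pi_{\overline{\omega}}(H)\lambda_\omega(B)$ bounded and $[\pi_{\overline{\omega}}(H)\lambda_\omega(B)]=\alpha\lambda_\omega(B)$. *)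

theory Defs
  imports "HOL-Analysis.Analysis" "HOL-Library.Complex_Order"
begin

text \<open>The ambient type 'a models the completion \<A> (a Banach space with norm \<parallel>.\<parallel>).
  Complex structure: iu is multiplication by the imaginary unit, and cscale c x is c x.
  A0 is the subset \<A>_0, mul the (partial) multiplication, star the involution,
  norm0 the C*-norm on \<A>_0, I the unit.\<close>

definition cscale :: "('a::real_vector \<Rightarrow> 'a) \<Rightarrow> complex \<Rightarrow> 'a \<Rightarrow> 'a" where
  "cscale iu c x = Re c *\<^sub>R x + Im c *\<^sub>R iu x"

definition CQ_star_algebra ::
  "'a::banach set \<Rightarrow> ('a \<Rightarrow> real) \<Rightarrow> ('a \<Rightarrow> 'a) \<Rightarrow> ('a \<Rightarrow> 'a \<Rightarrow> 'a) \<Rightarrow> ('a \<Rightarrow> 'a) \<Rightarrow> 'a \<Rightarrow> bool"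
where
  "CQ_star_algebra A0 norm0 iu mul star I \<longleftrightarrow>
     \<comment> \<open>complex normed space structure on \<A>\<close>
     linear iu \<and> (\<forall>x. iu (iu x) = - x) \<and>
     (\<forall>c x. norm (cscale iu c x) = cmod c * norm x) \<and>
     \<comment> \<open>\<A>_0 is a complex subspace, dense in \<A>\<close>
     0 \<in> A0 \<and> (\<forall>A\<in>A0. \<forall>B\<in>A0. A + B \<in> A0) \<and> (\<forall>c. \<forall>A\<in>A0. cscale iu c A \<in> A0) \<and>
     closure A0 = UNIV \<and>
     \<comment> \<open>\<A>_0 is a unital *-algebra\<close>
     I \<in> A0 \<and>
     (\<forall>A\<in>A0. \<forall>B\<in>A0. mul A B \<in> A0) \<and> (\<forall>A\<in>A0. star A \<in> A0) \<and>
     (\<forall>A\<in>A0. \<forall>B\<in>A0. \<forall>C\<in>A0. mul (mul A B) C = mul A (mul B C)) \<and>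
     (\<forall>A\<in>A0. \<forall>B\<in>A0. \<forall>C\<in>A0. mul (A + B) C = mul A C + mul B C \<and> mul C (A + B) = mul C A + mul C B) \<and>
     (\<forall>c. \<forall>A\<in>A0. \<forall>B\<in>A0. mul (cscale iu c A) B = cscale iu c (mul A B) \<and> mul A (cscale iu c B) = cscale iu c (mul A B)) \<and>
     (\<forall>A\<in>A0. mul I A = A \<and> mul A I = A) \<and>
     (\<forall>A\<in>A0. \<forall>B\<in>A0. star (A + B) = star A + star B) \<and>
     (\<forall>c. \<forall>A\<in>A0. star (cscale iu c A) = cscale iu (cnj c) (star A)) \<and>
     (\<forall>A\<in>A0. star (star A) = A) \<and>
     (\<forall>A\<in>A0. \<forall>B\<in>A0. star (mul A B) = mul (star B) (star A)) \<and>
     \<comment> \<open>norm0 is a C*-norm on \<A>_0 and \<A>_0 is complete for it\<close>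
     (\<forall>A\<in>A0. 0 \<le> norm0 A \<and> (norm0 A = 0 \<longleftrightarrow> A = 0)) \<and>
     (\<forall>A\<in>A0. \<forall>B\<in>A0. norm0 (A + B) \<le> norm0 A + norm0 B) \<and>
     (\<forall>c. \<forall>A\<in>A0. norm0 (cscale iu c A) = cmod c * norm0 A) \<and>
     (\<forall>A\<in>A0. \<forall>B\<in>A0. norm0 (mul A B) \<le> norm0 A * norm0 B) \<and>
     (\<forall>A\<in>A0. norm0 (mul (star A) A) = (norm0 A)\<^sup>2) \<and>
     (\<forall>An. (\<forall>n. An n \<in> A0) \<and> (\<forall>e>0. \<exists>N. \<forall>m\<ge>N. \<forall>n\<ge>N. norm0 (An m - An n) < e)
        \<longrightarrow> (\<exists>L\<in>A0. (\<lambda>n. norm0 (An n - L)) \<longlonglongrightarrow> 0)) \<and>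
     \<comment> \<open>compatibility of \<parallel>.\<parallel> with \<parallel>.\<parallel>_0\<close>
     (\<forall>A\<in>A0. norm A \<le> norm0 A) \<and>
     (\<forall>A\<in>A0. \<forall>B\<in>A0. norm (mul A B) \<le> norm A * norm0 B) \<and>
     (\<forall>A\<in>A0. norm (star A) = norm A) \<and>
     \<comment> \<open>the extended operations on the completion \<A>: XA, AX, X*\<close>
     (\<forall>X. \<forall>A\<in>A0. \<forall>An. (\<forall>n. An n \<in> A0) \<and> An \<longlonglongrightarrow> X \<longrightarrow>
        (\<lambda>n. mul (An n) A) \<longlonglongrightarrow> mul X A \<and>
        (\<lambda>n. mul A (An n)) \<longlonglongrightarrow> mul A X \<and>
        (\<lambda>n. star (An n)) \<longlonglongrightarrow> star X)"

definition E_states ::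
  "'a::banach set \<Rightarrow> ('a \<Rightarrow> 'a) \<Rightarrow> ('a \<Rightarrow> 'a \<Rightarrow> 'a) \<Rightarrow> ('a \<Rightarrow> 'a) \<Rightarrow> 'a \<Rightarrow> ('a \<Rightarrow> complex) set"
where
  "E_states A0 iu mul star I = {\<omega>.
     (\<forall>A\<in>A0. \<forall>B\<in>A0. \<omega> (A + B) = \<omega> A + \<omega> B) \<and>
     (\<forall>c. \<forall>A\<in>A0. \<omega> (cscale iu c A) = c * \<omega> A) \<and>
     (\<forall>A\<in>A0. 0 \<le> \<omega> (mul (star A) A)) \<and>
     \<omega> I = 1 \<and>
     (\<exists>\<gamma>>0. \<forall>A\<in>A0. cmod (\<omega> A) \<le> \<gamma> * norm A)}"

definition omega_bar :: "'a::banach set \<Rightarrow> ('a \<Rightarrow> complex) \<Rightarrow> 'a \<Rightarrow> complex" where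
  "omega_bar A0 \<omega> X = (THE z. \<forall>An. (\<forall>n. An n \<in> A0) \<and> An \<longlonglongrightarrow> X \<longrightarrow> (\<lambda>n. \<omega> (An n)) \<longlonglongrightarrow> z)"

text \<open>GNS inner product (\<lambda>_\<omega>(A) | \<lambda>_\<omega>(B)) = \<omega>(B* A).\<close>
definition gns_ip :: "('a \<Rightarrow> complex) \<Rightarrow> ('a \<Rightarrow> 'a \<Rightarrow> 'a) \<Rightarrow> ('a \<Rightarrow> 'a) \<Rightarrow> 'a \<Rightarrow> 'a \<Rightarrow> complex" where
  "gns_ip \<omega> mul star A B = \<omega> (mul (star B) A)"

text \<open>\<langle>\<pi>_\<omega>bar(X) \<lambda>_\<omega>(B), \<lambda>_\<omega>(C)\<rangle> = \<omega>bar(C* X B).\<close>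
definition pi_form ::
  "'a::banach set \<Rightarrow> ('a \<Rightarrow> complex) \<Rightarrow> ('a \<Rightarrow> 'a \<Rightarrow> 'a) \<Rightarrow> ('a \<Rightarrow> 'a) \<Rightarrow> 'a \<Rightarrow> 'a \<Rightarrow> 'a \<Rightarrow> complex" where
  "pi_form A0 \<omega> mul star X B C = omega_bar A0 \<omega> (mul (star C) (mul X B))"

text \<open>\<pi>_\<omega>bar(X)\<lambda>_\<omega>(B) is bounded: the conjugate-linear functional on the dense subspace
  \<lambda>_\<omega>(\<A>_0) is bounded w.r.t. the GNS norm \<parallel>\<lambda>_\<omega>(C)\<parallel> = sqrt(\<omega>(C*C)),
  i.e. extends continuously to H_\<omega>.\<close>
definition pi_bounded ::
  "'a::banach set \<Rightarrow> ('a \<Rightarrow> complex) \<Rightarrow> ('a \<Rightarrow> 'a \<Rightarrow> 'a) \<Rightarrow> ('a \<Rightarrow> 'a) \<Rightarrow> 'a \<Rightarrow> 'a \<Rightarrow> bool" where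
  "pi_bounded A0 \<omega> mul star X B \<longleftrightarrow>
     (\<exists>K. \<forall>C\<in>A0. cmod (pi_form A0 \<omega> mul star X B C) \<le> K * sqrt (Re (gns_ip \<omega> mul star C C)))"

text \<open>Spec(\<pi>_\<omega>bar(X)). [\<pi>(X)\<lambda>(B)] = \<alpha> \<lambda>(B) is expressed by testing against the dense set
  \<lambda>_\<omega>(\<A>_0): \<langle>\<pi>(X)\<lambda>(B), \<lambda>(C)\<rangle> = (\<alpha>\<lambda>(B) | \<lambda>(C)) for all C.\<close>
definition Spec_pi ::
  "'a::banach set \<Rightarrow> ('a \<Rightarrow> complex) \<Rightarrow> ('a \<Rightarrow> 'a \<Rightarrow> 'a) \<Rightarrow> ('a \<Rightarrow> 'a) \<Rightarrow> 'a \<Rightarrow> complex set" where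
  "Spec_pi A0 \<omega> mul star X = {\<alpha>. \<exists>B\<in>A0.
     gns_ip \<omega> mul star B B \<noteq> 0 \<and> pi_bounded A0 \<omega> mul star X B \<and>
     (\<forall>C\<in>A0. pi_form A0 \<omega> mul star X B C = \<alpha> * gns_ip \<omega> mul star B C)}"

definition ground_state ::
  "'a::banach set \<Rightarrow> ('a \<Rightarrow> complex) \<Rightarrow> ('a \<Rightarrow> 'a \<Rightarrow> 'a) \<Rightarrow> ('a \<Rightarrow> 'a) \<Rightarrow> 'a \<Rightarrow> complex \<Rightarrow> bool" where
  "ground_state A0 \<omega> mul star H \<alpha> \<longleftrightarrow>
     (\<forall>A\<in>A0. omega_bar A0 \<omega> (mul A H) = \<alpha> * omega_bar A0 \<omega> A) \<and>
     (\<forall>B\<in>A0. pi_form A0 \<omega> mul star H B B \<ge> \<alpha> * gns_ip \<omega> mul star B B)"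

definition delta_H :: "('a::real_vector \<Rightarrow> 'a) \<Rightarrow> ('a \<Rightarrow> 'a \<Rightarrow> 'a) \<Rightarrow> 'a \<Rightarrow> 'a \<Rightarrow> 'a" where
  "delta_H iu mul H A = iu (mul H A - mul A H)"

end

theory Submission
  imports Defs
begin

text \<open>Since \<open>A0\<close> is dense and \<open>\<omega>\<close> is \<open>\<parallel>.\<parallel>\<close>-bounded, \<open>\<omega>bar\<close> is a limit of values of \<open>\<omega>\<close>, so it
  inherits linearity and hermiticity \<open>\<omega>bar(X*) = cnj (\<omega>bar X)\<close>. Taking \<open>A = I\<close> in the ground
  state condition gives \<open>\<omega>bar(H) = \<alpha>\<close>, hence \<open>\<alpha>\<close> is real, and with \<open>HA = (A* H)*\<close> also
  \<open>\<omega>bar(HA) = \<alpha> \<omega>(A) = \<omega>bar(AH)\<close>, which is (2). Expanding \<open>\<delta>_H\<close> shows that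
  \<open>-i \<omega>bar(A* \<delta>_H(A)) = \<langle>\<pi>(H)\<lambda>(A), \<lambda>(A)\<rangle> - \<alpha> (\<lambda>(A)|\<lambda>(A))\<close>, which is (1).
  Finally \<open>\<lambda>(I)\<close> is an eigenvector for \<open>\<alpha>\<close> (bounded by Cauchy-Schwarz for \<open>\<omega>\<close>), and an
  eigenvector \<open>\<lambda>(B)\<close> for \<open>\<beta>\<close> gives \<open>\<alpha> (\<lambda>(B)|\<lambda>(B)) \<le> \<beta> (\<lambda>(B)|\<lambda>(B))\<close>, so \<open>\<alpha> \<le> \<beta>\<close>.\<close>

locale cq_algebra =
  fixes A0 :: "'a::banach set" and norm0 :: "'a \<Rightarrow> real" and iu :: "'a \<Rightarrow> 'a"
    and mul :: "'a \<Rightarrow> 'a \<Rightarrow> 'a" and star :: "'a \<Rightarrow> 'a" and I :: 'a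
  assumes CQ_star_algebra: "CQ_star_algebra A0 norm0 iu mul star I"
begin

lemma
  shows linear_iu: "linear iu"
    and norm_cscale: "norm (cscale iu c x) = cmod c * norm x"
    and add_closed: "A \<in> A0 \<Longrightarrow> B \<in> A0 \<Longrightarrow> A + B \<in> A0"
    and cscale_closed: "A \<in> A0 \<Longrightarrow> cscale iu c A \<in> A0"
    and closure_A0: "closure A0 = UNIV"
    and unit_closed: "I \<in> A0"
    and mul_closed: "A \<in> A0 \<Longrightarrow> B \<in> A0 \<Longrightarrow> mul A B \<in> A0"
    and star_closed: "A \<in> A0 \<Longrightarrow> star A \<in> A0"
    and mul_assoc: "A \<in> A0 \<Longrightarrow> B \<in> A0 \<Longrightarrow> C \<in> A0 \<Longrightarrow> mul (mul A B) C = mul A (mul B C)"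
    and mul_add_left: "A \<in> A0 \<Longrightarrow> B \<in> A0 \<Longrightarrow> C \<in> A0 \<Longrightarrow> mul (A + B) C = mul A C + mul B C"
    and mul_add_right: "A \<in> A0 \<Longrightarrow> B \<in> A0 \<Longrightarrow> C \<in> A0 \<Longrightarrow> mul C (A + B) = mul C A + mul C B"
    and mul_cscale_left: "A \<in> A0 \<Longrightarrow> B \<in> A0 \<Longrightarrow> mul (cscale iu c A) B = cscale iu c (mul A B)"
    and mul_cscale_right: "A \<in> A0 \<Longrightarrow> B \<in> A0 \<Longrightarrow> mul A (cscale iu c B) = cscale iu c (mul A B)"
    and mul_unit_left_A0: "A \<in> A0 \<Longrightarrow> mul I A = A"
    and mul_unit_right_A0: "A \<in> A0 \<Longrightarrow> mul A I = A"
    and star_add: "A \<in> A0 \<Longrightarrow> B \<in> A0 \<Longrightarrow> star (A + B) = star A + star B"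
    and star_cscale: "A \<in> A0 \<Longrightarrow> star (cscale iu c A) = cscale iu (cnj c) (star A)"
    and star_star: "A \<in> A0 \<Longrightarrow> star (star A) = A"
    and star_mul: "A \<in> A0 \<Longrightarrow> B \<in> A0 \<Longrightarrow> star (mul A B) = mul (star B) (star A)"
    and tendsto_ext_mul_right:
      "A \<in> A0 \<Longrightarrow> (\<And>n. An n \<in> A0) \<Longrightarrow> An \<longlonglongrightarrow> X \<Longrightarrow> (\<lambda>n. mul (An n) A) \<longlonglongrightarrow> mul X A"
    and tendsto_ext_mul_left:
      "A \<in> A0 \<Longrightarrow> (\<And>n. An n \<in> A0) \<Longrightarrow> An \<longlonglongrightarrow> X \<Longrightarrow> (\<lambda>n. mul A (An n)) \<longlonglongrightarrow> mul A X"
    and tendsto_ext_star: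
      "(\<And>n. An n \<in> A0) \<Longrightarrow> An \<longlonglongrightarrow> X \<Longrightarrow> (\<lambda>n. star (An n)) \<longlonglongrightarrow> star X"
  using CQ_star_algebra unfolding CQ_star_algebra_def by auto

lemma cscale_imaginary_unit [simp]: "cscale iu \<i> x = iu x"
  by (simp add: cscale_def)

lemma cscale_minus_one [simp]: "cscale iu (-1) x = - x"
  by (simp add: cscale_def)

lemma cscale_add: "cscale iu c (x + y) = cscale iu c x + cscale iu c y"
  using linear_iu by (simp add: cscale_def linear_add scaleR_add_right)

lemma iu_closed: "A \<in> A0 \<Longrightarrow> iu A \<in> A0"
  using cscale_closed[of A \<i>] by simp

lemma diff_closed: "A \<in> A0 \<Longrightarrow> B \<in> A0 \<Longrightarrow> A - B \<in> A0"
  using add_closed[of A "- B"] cscale_closed[of B "-1"] by simp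

lemma mul_diff_right: "A \<in> A0 \<Longrightarrow> B \<in> A0 \<Longrightarrow> C \<in> A0 \<Longrightarrow> mul C (A - B) = mul C A - mul C B"
  using mul_add_right[of "A - B" B C] diff_closed by simp

lemma mul_iu_right: "A \<in> A0 \<Longrightarrow> B \<in> A0 \<Longrightarrow> mul A (iu B) = iu (mul A B)"
  using mul_cscale_right[of A B \<i>] by simp

lemma star_unit: "star I = I"
  using mul_unit_right_A0[of "star I"] star_mul[of "star I" I] star_closed star_star unit_closed
  by metis

lemma bounded_linear_iu: "bounded_linear iu"
proof (rule bounded_linear_intro[where K = 1])
  show "iu (x + y) = iu x + iu y" for x y
    using linear_iu by (simp add: linear_add)
  show "iu (r *\<^sub>R x) = r *\<^sub>R iu x" for r x
    using linear_iu by (simp add: linear_scale)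
  show "norm (iu x) \<le> norm x * 1" for x
    using norm_cscale[of \<i> x] by simp
qed

lemma A0_approximation:
  obtains An where "\<And>n. An n \<in> A0" "An \<longlonglongrightarrow> X"
  using closure_A0 closure_sequential[of X A0] by auto

text \<open>The operations with one factor outside \<open>A0\<close> are limits of operations in \<open>A0\<close>, so
  each identity below is obtained by computing one limit in two ways.\<close>

lemma mul_unit_left: "mul I X = X"
proof -
  obtain An where An: "\<And>n. An n \<in> A0" "An \<longlonglongrightarrow> X" using A0_approximation by blast
  have "(\<lambda>n. mul I (An n)) \<longlonglongrightarrow> mul I X" using tendsto_ext_mul_left[OF unit_closed An] .
  with An show ?thesis using mul_unit_left_A0 LIMSEQ_unique by simp
qed

lemma mul_unit_right: "mul X I = X"
proof -
  obtain An where An: "\<And>n. An n \<in> A0" "An \<longlonglongrightarrow> X" using A0_approximation by blast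
  have "(\<lambda>n. mul (An n) I) \<longlonglongrightarrow> mul X I" using tendsto_ext_mul_right[OF unit_closed An] .
  with An show ?thesis using mul_unit_right_A0 LIMSEQ_unique by simp
qed

lemma mul_diff_right_ext:
  assumes C: "C \<in> A0" shows "mul C (X - Y) = mul C X - mul C Y"
proof -
  obtain An where An: "\<And>n. An n \<in> A0" "An \<longlonglongrightarrow> X" using A0_approximation by blast
  obtain Bn where Bn: "\<And>n. Bn n \<in> A0" "Bn \<longlonglongrightarrow> Y" using A0_approximation by blast
  have "(\<lambda>n. mul C (An n - Bn n)) \<longlonglongrightarrow> mul C (X - Y)"
    using tendsto_ext_mul_left[OF C _ tendsto_diff[OF An(2) Bn(2)]] An(1) Bn(1) diff_closed by blast
  moreover have "(\<lambda>n. mul C (An n - Bn n)) \<longlonglongrightarrow> mul C X - mul C Y"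
    using tendsto_diff[OF tendsto_ext_mul_left[OF C An] tendsto_ext_mul_left[OF C Bn]]
      mul_diff_right[OF An(1) Bn(1) C] by simp
  ultimately show ?thesis using LIMSEQ_unique by blast
qed

lemma mul_iu_right_ext:
  assumes C: "C \<in> A0" shows "mul C (iu X) = iu (mul C X)"
proof -
  obtain An where An: "\<And>n. An n \<in> A0" "An \<longlonglongrightarrow> X" using A0_approximation by blast
  have "(\<lambda>n. mul C (iu (An n))) \<longlonglongrightarrow> mul C (iu X)"
    using tendsto_ext_mul_left[OF C _ bounded_linear.tendsto[OF bounded_linear_iu An(2)]]
      An(1) iu_closed by blast
  moreover have "(\<lambda>n. mul C (iu (An n))) \<longlonglongrightarrow> iu (mul C X)"
    using bounded_linear.tendsto[OF bounded_linear_iu tendsto_ext_mul_left[OF C An]]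
      mul_iu_right[OF C An(1)] by simp
  ultimately show ?thesis using LIMSEQ_unique by blast
qed

lemma mul_assoc_ext:
  assumes C: "C \<in> A0" and A: "A \<in> A0" shows "mul C (mul A X) = mul (mul C A) X"
proof -
  obtain An where An: "\<And>n. An n \<in> A0" "An \<longlonglongrightarrow> X" using A0_approximation by blast
  have "(\<lambda>n. mul C (mul A (An n))) \<longlonglongrightarrow> mul C (mul A X)"
    using tendsto_ext_mul_left[OF C _ tendsto_ext_mul_left[OF A An]] An(1) A mul_closed by blast
  moreover have "(\<lambda>n. mul C (mul A (An n))) \<longlonglongrightarrow> mul (mul C A) X"
    using tendsto_ext_mul_left[OF mul_closed[OF C A] An] mul_assoc[OF C A An(1)] by simp
  ultimately show ?thesis using LIMSEQ_unique by blast
qed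

lemma star_mul_ext:
  assumes C: "C \<in> A0" shows "star (mul C X) = mul (star X) (star C)"
proof -
  obtain An where An: "\<And>n. An n \<in> A0" "An \<longlonglongrightarrow> X" using A0_approximation by blast
  have "(\<lambda>n. star (mul C (An n))) \<longlonglongrightarrow> star (mul C X)"
    using tendsto_ext_star[OF _ tendsto_ext_mul_left[OF C An]] An(1) C mul_closed by blast
  moreover have "(\<lambda>n. star (mul C (An n))) \<longlonglongrightarrow> mul (star X) (star C)"
    using tendsto_ext_mul_right[OF star_closed[OF C] _ tendsto_ext_star[OF An]]
      An(1) star_closed star_mul[OF C An(1)] by simp
  ultimately show ?thesis using LIMSEQ_unique by blast
qed

lemma mul_delta_H:
  assumes "C \<in> A0" "A \<in> A0"
  shows "mul C (delta_H iu mul H A) = iu (mul C (mul H A) - mul (mul C A) H)"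
  unfolding delta_H_def using assms
  by (simp add: mul_iu_right_ext mul_diff_right_ext mul_assoc_ext)

end

locale cq_state = cq_algebra +
  fixes \<omega> :: "'a::banach \<Rightarrow> complex"
  assumes state: "\<omega> \<in> E_states A0 iu mul star I"
begin

lemma
  shows omega_add: "A \<in> A0 \<Longrightarrow> B \<in> A0 \<Longrightarrow> \<omega> (A + B) = \<omega> A + \<omega> B"
    and omega_cscale: "A \<in> A0 \<Longrightarrow> \<omega> (cscale iu c A) = c * \<omega> A"
    and omega_positive: "A \<in> A0 \<Longrightarrow> 0 \<le> \<omega> (mul (star A) A)"
    and omega_unit: "\<omega> I = 1"
    and omega_bounded: "\<exists>\<gamma>>0. \<forall>A\<in>A0. cmod (\<omega> A) \<le> \<gamma> * norm A"
  using state unfolding E_states_def by auto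

lemma omega_iu: "A \<in> A0 \<Longrightarrow> \<omega> (iu A) = \<i> * \<omega> A"
  using omega_cscale[of A \<i>] by simp

lemma omega_diff: "A \<in> A0 \<Longrightarrow> B \<in> A0 \<Longrightarrow> \<omega> (A - B) = \<omega> A - \<omega> B"
  using omega_add[of A "- B"] omega_cscale[of B "-1"] cscale_closed[of B "-1"] by simp

lemma omega_square_expand:
  assumes X: "X \<in> A0" and Y: "Y \<in> A0"
  shows "\<omega> (mul (star (X + cscale iu c Y)) (X + cscale iu c Y)) =
    \<omega> (mul (star X) X) + c * \<omega> (mul (star X) Y) + cnj c * \<omega> (mul (star Y) X)
      + cnj c * c * \<omega> (mul (star Y) Y)"
proof -
  have cY: "cscale iu c Y \<in> A0" using cscale_closed[OF Y] .
  have "mul (star (X + cscale iu c Y)) (X + cscale iu c Y) =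
      (mul (star X) X + cscale iu c (mul (star X) Y))
      + (cscale iu (cnj c) (mul (star Y) X) + cscale iu c (cscale iu (cnj c) (mul (star Y) Y)))"
    using X Y cY
    by (simp add: star_add star_cscale mul_add_left mul_add_right mul_cscale_left mul_cscale_right
        star_closed cscale_closed add_closed cscale_add)
  then show ?thesis
    using X Y by (simp add: omega_add omega_cscale star_closed mul_closed cscale_closed add_closed
        mult.left_commute)
qed

lemma omega_star: assumes A: "A \<in> A0" shows "\<omega> (star A) = cnj (\<omega> A)"
proof -
  have "0 \<le> 1 + c * \<omega> A + cnj c * \<omega> (star A) + cnj c * c * \<omega> (mul (star A) A)" for c
    using omega_square_expand[OF unit_closed A, of c] omega_positive[of "I + cscale iu c A"] A
    by (simp add: add_closed cscale_closed unit_closed star_unit mul_unit_left mul_unit_right omega_unit)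
  from this[of 1] this[of \<i>] omega_positive[OF A] show ?thesis
    by (simp add: less_eq_complex_def complex_eq_iff)
qed

lemma omega_cauchy_schwarz:
  assumes A: "A \<in> A0" shows "(cmod (\<omega> A))\<^sup>2 \<le> Re (\<omega> (mul (star A) A))"
proof -
  define z where "z = \<omega> A"
  have "0 \<le> \<omega> (mul (star A) A) - z * cnj z - cnj z * z + cnj z * z"
    using omega_square_expand[OF A unit_closed, of "- z"] omega_positive[of "A + cscale iu (- z) I"] A
    by (simp add: add_closed cscale_closed unit_closed star_unit mul_unit_left mul_unit_right
        omega_unit omega_star z_def)
  then have "Re (z * cnj z) \<le> Re (\<omega> (mul (star A) A))"
    by (simp add: less_eq_complex_def)
  then show ?thesis unfolding cmod_power2 by (simp add: z_def power2_eq_square)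
qed

lemma omega_lipschitz: obtains \<gamma> where "\<gamma>-lipschitz_on A0 \<omega>"
proof -
  obtain \<gamma> where \<gamma>: "\<gamma> > 0" "\<forall>A\<in>A0. cmod (\<omega> A) \<le> \<gamma> * norm A"
    using omega_bounded by blast
  have "dist (\<omega> A) (\<omega> B) \<le> \<gamma> * dist A B" if "A \<in> A0" "B \<in> A0" for A B
  proof -
    have "dist (\<omega> A) (\<omega> B) = cmod (\<omega> (A - B))" by (simp add: dist_norm omega_diff that)
    also have "\<dots> \<le> \<gamma> * norm (A - B)" using \<gamma>(2) diff_closed[OF that] by blast
    finally show ?thesis by (simp add: dist_norm)
  qed
  with \<gamma>(1) show thesis by (intro that lipschitz_onI) auto
qed

lemma omega_bar_tendsto:
  assumes An: "\<And>n. An n \<in> A0" "An \<longlonglongrightarrow> X"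
  shows "(\<lambda>n. \<omega> (An n)) \<longlonglongrightarrow> omega_bar A0 \<omega> X"
proof -
  obtain \<gamma> where \<gamma>: "\<gamma>-lipschitz_on A0 \<omega>" using omega_lipschitz .
  have "Cauchy (\<lambda>n. \<omega> (An n))"
    using uniformly_continuous_on_Cauchy[OF lipschitz_on_uniformly_continuous[OF \<gamma>]
        LIMSEQ_imp_Cauchy[OF An(2)] An(1)] .
  then obtain z where z: "(\<lambda>n. \<omega> (An n)) \<longlonglongrightarrow> z"
    using Cauchy_convergent_iff convergent_def by blast
  have any_approximation: "(\<lambda>n. \<omega> (Bn n)) \<longlonglongrightarrow> z" if Bn: "\<And>n. Bn n \<in> A0" "Bn \<longlonglongrightarrow> X" for Bn
  proof (rule Lim_transform[OF z])
    have bound: "\<forall>n. norm (\<omega> (Bn n) - \<omega> (An n)) \<le> \<gamma> * dist (Bn n) (An n)"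
      using lipschitz_onD[OF \<gamma> Bn(1) An(1)] by (simp add: dist_norm)
    have "(\<lambda>n. \<gamma> * dist (Bn n) (An n)) \<longlonglongrightarrow> 0"
      using tendsto_mult_left[OF tendsto_dist[OF Bn(2) An(2)], of \<gamma>] by simp
    then show "(\<lambda>n. \<omega> (Bn n) - \<omega> (An n)) \<longlonglongrightarrow> 0"
      by (rule Lim_null_comparison[OF always_eventually[OF bound]])
  qed
  have "omega_bar A0 \<omega> X = z"
    unfolding omega_bar_def
  proof (rule the_equality)
    show "\<forall>Bn. (\<forall>n. Bn n \<in> A0) \<and> Bn \<longlonglongrightarrow> X \<longrightarrow> (\<lambda>n. \<omega> (Bn n)) \<longlonglongrightarrow> z"
      using any_approximation by blast
    fix y assume "\<forall>Bn. (\<forall>n. Bn n \<in> A0) \<and> Bn \<longlonglongrightarrow> X \<longrightarrow> (\<lambda>n. \<omega> (Bn n)) \<longlonglongrightarrow> y"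
    then have "(\<lambda>n. \<omega> (An n)) \<longlonglongrightarrow> y" using An by blast
    then show "y = z" using z by (rule LIMSEQ_unique)
  qed
  with z show ?thesis by simp
qed

lemma omega_bar_A0: "A \<in> A0 \<Longrightarrow> omega_bar A0 \<omega> A = \<omega> A"
  using omega_bar_tendsto[of "\<lambda>n. A" A] by (simp add: LIMSEQ_const_iff)

lemma omega_bar_diff: "omega_bar A0 \<omega> (X - Y) = omega_bar A0 \<omega> X - omega_bar A0 \<omega> Y"
proof -
  obtain An where An: "\<And>n. An n \<in> A0" "An \<longlonglongrightarrow> X" using A0_approximation by blast
  obtain Bn where Bn: "\<And>n. Bn n \<in> A0" "Bn \<longlonglongrightarrow> Y" using A0_approximation by blast
  have "(\<lambda>n. \<omega> (An n - Bn n)) \<longlonglongrightarrow> omega_bar A0 \<omega> (X - Y)"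
    using omega_bar_tendsto[OF _ tendsto_diff[OF An(2) Bn(2)]] An(1) Bn(1) diff_closed by blast
  moreover have "(\<lambda>n. \<omega> (An n - Bn n)) \<longlonglongrightarrow> omega_bar A0 \<omega> X - omega_bar A0 \<omega> Y"
    using tendsto_diff[OF omega_bar_tendsto[OF An] omega_bar_tendsto[OF Bn]]
      omega_diff[OF An(1) Bn(1)] by simp
  ultimately show ?thesis using LIMSEQ_unique by blast
qed

lemma omega_bar_iu: "omega_bar A0 \<omega> (iu X) = \<i> * omega_bar A0 \<omega> X"
proof -
  obtain An where An: "\<And>n. An n \<in> A0" "An \<longlonglongrightarrow> X" using A0_approximation by blast
  have "(\<lambda>n. \<omega> (iu (An n))) \<longlonglongrightarrow> omega_bar A0 \<omega> (iu X)"
    using omega_bar_tendsto[OF _ bounded_linear.tendsto[OF bounded_linear_iu An(2)]]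
      An(1) iu_closed by blast
  moreover have "(\<lambda>n. \<omega> (iu (An n))) \<longlonglongrightarrow> \<i> * omega_bar A0 \<omega> X"
    using tendsto_mult_left[OF omega_bar_tendsto[OF An]] omega_iu[OF An(1)] by simp
  ultimately show ?thesis using LIMSEQ_unique by blast
qed

lemma omega_bar_star: "omega_bar A0 \<omega> (star X) = cnj (omega_bar A0 \<omega> X)"
proof -
  obtain An where An: "\<And>n. An n \<in> A0" "An \<longlonglongrightarrow> X" using A0_approximation by blast
  have "(\<lambda>n. \<omega> (star (An n))) \<longlonglongrightarrow> omega_bar A0 \<omega> (star X)"
    using omega_bar_tendsto[OF _ tendsto_ext_star[OF An]] An(1) star_closed by blast
  moreover have "(\<lambda>n. \<omega> (star (An n))) \<longlonglongrightarrow> cnj (omega_bar A0 \<omega> X)"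
    using tendsto_cnj[OF omega_bar_tendsto[OF An]] omega_star[OF An(1)] by simp
  ultimately show ?thesis using LIMSEQ_unique by blast
qed

context
  fixes H :: 'a and \<alpha> :: complex
  assumes star_H: "star H = H"
    and ground_state: "ground_state A0 \<omega> mul star H \<alpha>"
begin

lemma omega_bar_mul_H: "A \<in> A0 \<Longrightarrow> omega_bar A0 \<omega> (mul A H) = \<alpha> * \<omega> A"
  using ground_state omega_bar_A0 unfolding ground_state_def by simp

lemma ground_state_energy_bound:
  "B \<in> A0 \<Longrightarrow> \<alpha> * gns_ip \<omega> mul star B B \<le> pi_form A0 \<omega> mul star H B B"
  using ground_state unfolding ground_state_def by blast

lemma ground_state_eigenvalue_real: "cnj \<alpha> = \<alpha>"
proof -
  have "omega_bar A0 \<omega> H = \<alpha>"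
    using omega_bar_mul_H[OF unit_closed] by (simp add: mul_unit_left omega_unit)
  then show ?thesis using omega_bar_star[of H] star_H by simp
qed

lemma omega_bar_H_mul:
  assumes A: "A \<in> A0" shows "omega_bar A0 \<omega> (mul H A) = \<alpha> * \<omega> A"
proof -
  have "mul H A = star (mul (star A) H)"
    using star_mul_ext[OF star_closed[OF A]] star_H star_star[OF A] by simp
  then show ?thesis
    using omega_bar_mul_H[OF star_closed[OF A]] ground_state_eigenvalue_real
    by (simp add: omega_bar_star omega_star[OF A])
qed

lemma omega_bar_star_mul_delta_H_nonneg:
  assumes A: "A \<in> A0"
  shows "- \<i> * omega_bar A0 \<omega> (mul (star A) (delta_H iu mul H A)) \<ge> 0"
proof -
  have "omega_bar A0 \<omega> (mul (star A) (delta_H iu mul H A)) =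
      \<i> * (pi_form A0 \<omega> mul star H A A - \<alpha> * gns_ip \<omega> mul star A A)"
    using mul_delta_H[OF star_closed[OF A] A] omega_bar_mul_H[OF mul_closed[OF star_closed[OF A] A]]
    unfolding pi_form_def gns_ip_def by (simp add: omega_bar_iu omega_bar_diff)
  then show ?thesis
    using ground_state_energy_bound[OF A] by (simp add: less_eq_complex_def)
qed

lemma omega_bar_delta_H_eq_0: "A \<in> A0 \<Longrightarrow> omega_bar A0 \<omega> (delta_H iu mul H A) = 0"
  unfolding delta_H_def by (simp add: omega_bar_iu omega_bar_diff omega_bar_mul_H omega_bar_H_mul)

lemma ground_state_eigenvalue_in_Spec_pi: "\<alpha> \<in> Spec_pi A0 \<omega> mul star H"
  unfolding Spec_pi_def
proof (intro CollectI bexI[of _ I] conjI ballI)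
  have pi_form_unit: "pi_form A0 \<omega> mul star H I C = \<alpha> * \<omega> (star C)" if C: "C \<in> A0" for C
    unfolding pi_form_def using omega_bar_mul_H[OF star_closed[OF C]] by (simp add: mul_unit_right)
  show "gns_ip \<omega> mul star I I \<noteq> 0"
    unfolding gns_ip_def by (simp add: star_unit mul_unit_left omega_unit)
  show "pi_form A0 \<omega> mul star H I C = \<alpha> * gns_ip \<omega> mul star I C" if "C \<in> A0" for C
    unfolding gns_ip_def using pi_form_unit[OF that] by (simp add: mul_unit_right)
  show "pi_bounded A0 \<omega> mul star H I"
    unfolding pi_bounded_def
  proof (intro exI ballI)
    fix C assume C: "C \<in> A0"
    have "cmod (\<omega> C) \<le> sqrt (Re (\<omega> (mul (star C) C)))"
      using omega_cauchy_schwarz[OF C] real_le_rsqrt by blast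
    then show "cmod (pi_form A0 \<omega> mul star H I C) \<le> cmod \<alpha> * sqrt (Re (gns_ip \<omega> mul star C C))"
      unfolding gns_ip_def pi_form_unit[OF C] omega_star[OF C] by (simp add: norm_mult mult_left_mono)
  qed
qed (rule unit_closed)

lemma ground_state_eigenvalue_le_Spec_pi:
  assumes "\<beta> \<in> Spec_pi A0 \<omega> mul star H" shows "\<alpha> \<le> \<beta>"
proof -
  obtain B where B: "B \<in> A0" "gns_ip \<omega> mul star B B \<noteq> 0"
      "pi_form A0 \<omega> mul star H B B = \<beta> * gns_ip \<omega> mul star B B"
    using assms unfolding Spec_pi_def by blast
  define r where "r = gns_ip \<omega> mul star B B"
  have "0 \<le> r" unfolding r_def gns_ip_def using omega_positive[OF B(1)] .
  with B(2) have r: "Im r = 0" "Re r > 0"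
    by (auto simp: r_def less_eq_complex_def complex_eq_iff)
  have "\<alpha> * r \<le> \<beta> * r" using ground_state_energy_bound[OF B(1)] B(3) unfolding r_def by simp
  with r show ?thesis by (simp add: less_eq_complex_def)
qed

end

end

theorem theorem5p8:
  fixes A0 :: "'a::banach set" and norm0 :: "'a \<Rightarrow> real" and iu :: "'a \<Rightarrow> 'a"
    and mul :: "'a \<Rightarrow> 'a \<Rightarrow> 'a" and star :: "'a \<Rightarrow> 'a" and I H :: 'a
    and \<omega> :: "'a \<Rightarrow> complex" and \<alpha> :: complex
  assumes "CQ_star_algebra A0 norm0 iu mul star I"
    and "star H = H"
    and "\<omega> \<in> E_states A0 iu mul star I"
    and "ground_state A0 \<omega> mul star H \<alpha>"
  shows "(\<forall>A\<in>A0. - \<i> * omega_bar A0 \<omega> (mul (star A) (delta_H iu mul H A))\<ge> 0) \<and>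
         (\<forall>A\<in>A0. omega_bar A0 \<omega> (delta_H iu mul H A) = 0) \<and>
         (\<alpha> \<in> Spec_pi A0 \<omega> mul star H \<and> (\<forall>\<beta>\<in>Spec_pi A0 \<omega> mul star H. \<alpha> \<le> \<beta>))"
proof -
  interpret cq_state A0 norm0 iu mul star I \<omega>
    using assms(1,3) by unfold_locales
  show ?thesis
    by (intro conjI ballI omega_bar_star_mul_delta_H_nonneg[OF assms(2,4)]
        omega_bar_delta_H_eq_0[OF assms(2,4)]
        ground_state_eigenvalue_in_Spec_pi[OF assms(2,4)]
        ground_state_eigenvalue_le_Spec_pi[OF assms(2,4)])
qed

end
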